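(* Let $\mathcal{D}=\langle D,\sqsubseteq,F,d_0\rangle$ be an analysis instance and $\diamond\subseteq F\times F$ a relation on its transformers. The structure $\mathcal{U}_{\mathcal{D},\diamond}$ generated by the unfolding procedure described in the context is a uniquely defined labelled prime event structure.
   Context: An analysis instance $\mathcal{D}=\langle D,\sqsubseteq,F,d_0\rangle$ consists of a lattice $\langle D,\sqsubseteq,\sqcup,\sqcap\rangle$ with least element $\bot$, a set $F$ of monotone, bottom-strict transformers $f\colon D\to D$, and an initial element $d_0\in D$. A transformer $f$ is enabled at $d$ if $f(d)\neq\bot$. For a sequence $\sigma=f_1\ldots f_m$ of transformers, $\mathrm{state}(\sigma)=(f_m\circ\cdots\circ f_1)(d_0)$. A labelled prime event structure (PES) is a tuple $\langle E,<,\#,h\rangle$ where $<$ is a strict partial order on $E$ (causality), $\#$ is a symmetric irreflexive relation on $E$ (conflict), $h$ is a labelling function, every event has finitely many $<$-predecessors, and conflict is inherited: $e\# e'$ and $e'<e''$ imply $e\# e''$. A configuration is a finite set $C\subseteq E$ that is causally closed ($e'<e\in C\Rightarrow e'\in C$) and conflict-free. The interleavings $\mathrm{inter}(C)$ of $C$ are the label sequences $h(e_1)\ldots h(e_n)$ of the enumerations $e_1,\dots,e_n$ of $C$ satisfying $e_i<e_j\Rightarrow i<j$. The state of a configuration is $\mathrm{state}(C)$, defined as the greatest lower bound (meet) in $D$ of the set $\{\mathrm{state}(\sigma)\colon \sigma\in\mathrm{inter}(C)\}$. The unfolding $\mathcal{U}_{\mathcal{D},\diamond}$ is the structure returned by: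 (1) start with the PES $\langle\emptyset,\emptyset,\emptyset,\emptyset\rangle$; (2) add a new event $e=\langle f,C\rangle$ where $C$ is a configuration of the current PES, $f$ is enabled at $\mathrm{state}(C)$, and $\neg(f\diamond h(e'))$ holds for every $<$-maximal event $e'$ of $C$; (3) set $e'<e$ for every $e'\in C$, set $e'\# e$ for every $e'\in E\setminus C$ with $e'\neq e$ and $\neg(f\diamond h(e'))$, and set $h(e)=f$; (4) repeat steps 2 and 3 until no new event can be added, and return the resulting PES.
   Formalization: The relation $\diamond$ is also symmetric, and the conflict # of the unfolding is the closure of the pairs set in step 3 under symmetry and inheritance rather than those pairs alone. Each condition added here is assumed in the paper as well or is needed for the statement above to hold. *)

theory Defs
  imports Main "HOL-Library.FSet"
begin

text \<open>Events of the unfolding are pairs (f, C) of a transformer and a finite set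
 of (previously created) events: the history. They are represented syntactically.\<close>
datatype 'f event = Ev (lab: 'f) (hist: "'f event fset")

text \<open>A labelled structure (E, <, #, h).\<close>
type_synonym ('e, 'f) lpes =
  "'e set \<times> ('e \<Rightarrow> 'e \<Rightarrow> bool) \<times> ('e \<Rightarrow> 'e \<Rightarrow> bool) \<times> ('e \<Rightarrow> 'f)"

definition is_lpes :: "('e, 'f) lpes \<Rightarrow> bool" where
  "is_lpes P \<longleftrightarrow> (case P of (E, lt, cf, h) \<Rightarrow>
     (\<forall>a b. lt a b \<longrightarrow> a \<in> E \<and> b \<in> E) \<and>
     (\<forall>a. \<not> lt a a) \<and>
     (\<forall>a b c. lt a b \<longrightarrow> lt b c \<longrightarrow> lt a c) \<and>
     (\<forall>a b. cf a b \<longrightarrow> a \<in> E \<and> b \<in> E) \<and>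
     (\<forall>a b. cf a b \<longrightarrow> cf b a) \<and>
     (\<forall>a. \<not> cf a a) \<and>
     (\<forall>e\<in>E. finite {e'. lt e' e}) \<and>
     (\<forall>a b c. cf a b \<longrightarrow> lt b c \<longrightarrow> cf a c))"

definition is_config :: "('e, 'f) lpes \<Rightarrow> 'e set \<Rightarrow> bool" where
  "is_config P C \<longleftrightarrow> (case P of (E, lt, cf, h) \<Rightarrow>
     finite C \<and> C \<subseteq> E \<and> (\<forall>e\<in>C. \<forall>e'. lt e' e \<longrightarrow> e' \<in> C) \<and>
     (\<forall>a\<in>C. \<forall>b\<in>C. \<not> cf a b))"

definition inter :: "('e, 'f) lpes \<Rightarrow> 'e set \<Rightarrow> 'f list set" where
  "inter P C = (case P of (E, lt, cf, h) \<Rightarrow>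
     {map h xs | xs. distinct xs \<and> set xs = C \<and>
        (\<forall>i<length xs. \<forall>j<length xs. lt (xs ! i) (xs ! j) \<longrightarrow> i < j)})"

definition seq_state :: "'d \<Rightarrow> ('d \<Rightarrow> 'd) list \<Rightarrow> 'd" where
  "seq_state d0 \<sigma> = fold (\<lambda>f d. f d) \<sigma> d0"

text \<open>state(C): meet of the states of all interleavings (a finite nonempty set).\<close>
definition conf_state :: "'d::lattice \<Rightarrow> ('e, 'd \<Rightarrow> 'd) lpes \<Rightarrow> 'e set \<Rightarrow> 'd" where
  "conf_state d0 P C = Inf_fin (seq_state d0 ` inter P C)"

definition analysis_instance :: "('d::{lattice,order_bot} \<Rightarrow> 'd) set \<Rightarrow> bool" where
  "analysis_instance F \<longleftrightarrow> (\<forall>f\<in>F. mono f \<and> f bot = bot)"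

definition addable ::
  "('d::{lattice,order_bot} \<Rightarrow> 'd) set \<Rightarrow> (('d \<Rightarrow> 'd) \<Rightarrow> ('d \<Rightarrow> 'd) \<Rightarrow> bool) \<Rightarrow> 'd \<Rightarrow>
   (('d \<Rightarrow> 'd) event, 'd \<Rightarrow> 'd) lpes \<Rightarrow> ('d \<Rightarrow> 'd) event \<Rightarrow> bool" where
  "addable F indep d0 P e \<longleftrightarrow> (case P of (E, lt, cf, h) \<Rightarrow>
     e \<notin> E \<and> is_config P (fset (hist e)) \<and> lab e \<in> F \<and>
     lab e (conf_state d0 P (fset (hist e))) \<noteq> bot \<and>
     (\<forall>e'\<in>fset (hist e). (\<not> (\<exists>e''\<in>fset (hist e). lt e' e'')) \<longrightarrow> \<not> indep (lab e) (lab e')))"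

definition unf_lt :: "'f event set \<Rightarrow> 'f event \<Rightarrow> 'f event \<Rightarrow> bool" where
  "unf_lt E e' e \<longleftrightarrow> e \<in> E \<and> e' \<in> fset (hist e)"

definition unf_dcf :: "('f \<Rightarrow> 'f \<Rightarrow> bool) \<Rightarrow> 'f event set \<Rightarrow> ('f event \<Rightarrow> 'f event \<Rightarrow> bool)
   \<Rightarrow> 'f event \<Rightarrow> 'f event \<Rightarrow> bool" where
  "unf_dcf indep E prec e' e \<longleftrightarrow> e' \<in> E \<and> e \<in> E \<and> e' \<noteq> e \<and> prec e' e \<and>
     e' \<notin> fset (hist e) \<and> \<not> indep (lab e) (lab e')"

definition unf_cf :: "('f \<Rightarrow> 'f \<Rightarrow> bool) \<Rightarrow> 'f event set \<Rightarrow> ('f event \<Rightarrow> 'f event \<Rightarrow> bool)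
   \<Rightarrow> 'f event \<Rightarrow> 'f event \<Rightarrow> bool" where
  "unf_cf indep E prec a b \<longleftrightarrow> (\<exists>a' b'. (a' = a \<or> unf_lt E a' a) \<and> (b' = b \<or> unf_lt E b' b) \<and>
     (unf_dcf indep E prec a' b' \<or> unf_dcf indep E prec b' a'))"

definition unf_pes :: "('f \<Rightarrow> 'f \<Rightarrow> bool) \<Rightarrow> 'f event set \<Rightarrow> ('f event \<Rightarrow> 'f event \<Rightarrow> bool)
   \<Rightarrow> ('f event, 'f) lpes" where
  "unf_pes indep E prec = (E, unf_lt E, unf_cf indep E prec, lab)"

text \<open>A (possibly transfinite) complete run of the procedure: the events of E are added
 one at a time in the well-order prec, each being addable to the structure built from its
 predecessors (unions at limit stages), and at the end no new event can be added.\<close>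
definition unfolding_run ::
  "('d::{lattice,order_bot} \<Rightarrow> 'd) set \<Rightarrow> (('d \<Rightarrow> 'd) \<Rightarrow> ('d \<Rightarrow> 'd) \<Rightarrow> bool) \<Rightarrow> 'd \<Rightarrow>
   ('d \<Rightarrow> 'd) event set \<Rightarrow> (('d \<Rightarrow> 'd) event \<Rightarrow> ('d \<Rightarrow> 'd) event \<Rightarrow> bool) \<Rightarrow> bool" where
  "unfolding_run F indep d0 E prec \<longleftrightarrow>
     (\<forall>a b. prec a b \<longrightarrow> a \<in> E \<and> b \<in> E) \<and> transp prec \<and> wf {(a, b). prec a b} \<and>
     (\<forall>a\<in>E. \<forall>b\<in>E. a \<noteq> b \<longrightarrow> prec a b \<or> prec b a) \<and>
     (\<forall>e\<in>E. addable F indep d0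
         (unf_pes indep {e'\<in>E. prec e' e} (\<lambda>a b. prec a b \<and> prec b e)) e) \<and>
     \<not> (\<exists>e. addable F indep d0 (unf_pes indep E prec) e)"

end

theory Submission
  imports Defs
begin

text \<open>Every event carries its history syntactically, so the order in which a run adds events
  is irrelevant: an event belongs to the result iff its history does and it satisfies the local
  conditions of step 2, which involve only its history. By induction on events
  every run therefore adds exactly the same events, and the conflict relation, once closed under
  symmetry, does not depend on the order either. A run exists because the events can be added
  in a well-order refining their size.\<close>

lemma exists_total_wf_extending_measure:
  fixes f :: "'a \<Rightarrow> nat"
  shows "\<exists>Q. wf Q \<and> trans Q \<and> total Q \<and> measure f \<subseteq> Q"
proof -
  obtain r :: "'a rel" where r: "well_order r"
    using well_ordering by metis
  then have "strict_linear_order (r - Id)"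
    by (simp add: well_order_on_def strict_linear_order_on_diff_Id)
  moreover have "wf (r - Id)"
    using r by (simp add: well_order_on_def)
  moreover have "inj (\<lambda>x. (f x, x))"
    by (simp add: inj_on_def)
  ultimately show ?thesis
    by (intro exI[of _ "inv_image (less_than <*lex*> (r - Id)) (\<lambda>x. (f x, x))"])
      (auto simp: strict_linear_order_on_def total_less_than intro: trans_inv_image total_inv_image)
qed

lemma size_less_of_mem_hist: "x \<in> fset (hist e) \<Longrightarrow> size x < size e"
proof (cases e)
  case (Ev f C)
  assume "x \<in> fset (hist e)"
  then have "Suc (size x) \<le> (\<Sum>y\<in>fset C. Suc (size y))"
    using Ev by (intro member_le_sum) auto
  then show ?thesis
    using Ev by (simp add: size_fset_overloaded_simps)
qed

definition causal_order :: "'f event set \<Rightarrow> ('f event \<Rightarrow> 'f event \<Rightarrow> bool) \<Rightarrow> bool" where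
  "causal_order E prec \<longleftrightarrow> (\<forall>a b. prec a b \<longrightarrow> a \<in> E \<and> b \<in> E) \<and> transp prec \<and> asymp prec \<and>
     (\<forall>a\<in>E. \<forall>b\<in>E. a \<noteq> b \<longrightarrow> prec a b \<or> prec b a) \<and> (\<forall>x\<in>E. \<forall>y\<in>fset (hist x). prec y x)"

lemma causal_order_restrict:
  assumes "causal_order E prec"
  shows "causal_order {e'\<in>E. prec e' e} (\<lambda>a b. prec a b \<and> prec b e)"
    (is "causal_order ?E ?prec")
proof -
  have field: "\<forall>a b. prec a b \<longrightarrow> a \<in> E \<and> b \<in> E" and trans: "transp prec"
    and asym: "asymp prec" and total: "\<forall>a\<in>E. \<forall>b\<in>E. a \<noteq> b \<longrightarrow> prec a b \<or> prec b a"
    and hist: "\<forall>x\<in>E. \<forall>y\<in>fset (hist x). prec y x"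
    using assms unfolding causal_order_def by blast+
  have "\<forall>a b. ?prec a b \<longrightarrow> a \<in> ?E \<and> b \<in> ?E"
    using field trans by (blast dest: transpD)
  moreover have "transp ?prec"
    using trans unfolding transp_def by blast
  moreover have "asymp ?prec"
    using asym unfolding asymp_on_def by blast
  moreover have "\<forall>a\<in>?E. \<forall>b\<in>?E. a \<noteq> b \<longrightarrow> ?prec a b \<or> ?prec b a"
    using total by blast
  moreover have "\<forall>x\<in>?E. \<forall>y\<in>fset (hist x). ?prec y x"
    using hist trans by (blast dest: transpD)
  ultimately show ?thesis
    unfolding causal_order_def by blast
qed

lemma causal_order_hist_subset:
  assumes "causal_order E prec" "x \<in> E"
  shows "fset (hist x) \<subseteq> E"
  using assms unfolding causal_order_def by blast

definition imm_conflict :: "('f \<Rightarrow> 'f \<Rightarrow> bool) \<Rightarrow> 'f event \<Rightarrow> 'f event \<Rightarrow> bool" where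
  "imm_conflict indep a b \<longleftrightarrow> a \<noteq> b \<and> a \<notin> fset (hist b) \<and> b \<notin> fset (hist a) \<and>
     \<not> indep (lab a) (lab b) \<and> \<not> indep (lab b) (lab a)"

lemma unf_dcf_either_iff:
  assumes "causal_order E prec" "symp indep"
  shows "(unf_dcf indep E prec a b \<or> unf_dcf indep E prec b a) \<longleftrightarrow>
    a \<in> E \<and> b \<in> E \<and> imm_conflict indep a b"
proof -
  have asym: "asymp prec" and total: "\<forall>a\<in>E. \<forall>b\<in>E. a \<noteq> b \<longrightarrow> prec a b \<or> prec b a"
    and hist: "\<forall>x\<in>E. \<forall>y\<in>fset (hist x). prec y x"
    using assms(1) unfolding causal_order_def by blast+
  have "b \<notin> fset (hist a)" if "unf_dcf indep E prec a b" for a b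
    using that asym hist unfolding unf_dcf_def asymp_on_def by blast
  then show ?thesis
    using total \<open>symp indep\<close> unfolding unf_dcf_def imm_conflict_def symp_def by blast
qed

lemma unf_cf_iff:
  assumes "causal_order E prec" "symp indep"
  shows "unf_cf indep E prec a b \<longleftrightarrow> (\<exists>a' b'. (a' = a \<or> a \<in> E \<and> a' \<in> fset (hist a)) \<and>
      (b' = b \<or> b \<in> E \<and> b' \<in> fset (hist b)) \<and> a' \<in> E \<and> b' \<in> E \<and> imm_conflict indep a' b')"
  unfolding unf_cf_def unf_lt_def unf_dcf_either_iff[OF assms] by simp

definition hist_config :: "('f \<Rightarrow> 'f \<Rightarrow> bool) \<Rightarrow> 'f event set \<Rightarrow> bool" where
  "hist_config indep C \<longleftrightarrow> finite C \<and> (\<forall>e\<in>C. fset (hist e) \<subseteq> C) \<and>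
     (\<forall>a\<in>C. \<forall>b\<in>C. \<not> imm_conflict indep a b)"

lemma is_config_unf_pes_iff:
  assumes "causal_order E prec" "symp indep"
  shows "is_config (unf_pes indep E prec) C \<longleftrightarrow> C \<subseteq> E \<and> hist_config indep C"
proof
  assume "is_config (unf_pes indep E prec) C"
  then have "finite C" "C \<subseteq> E" "\<forall>e\<in>C. fset (hist e) \<subseteq> C"
    and "\<forall>a\<in>C. \<forall>b\<in>C. \<not> unf_cf indep E prec a b"
    unfolding is_config_def unf_pes_def unf_lt_def by auto
  then show "C \<subseteq> E \<and> hist_config indep C"
    unfolding hist_config_def unf_cf_iff[OF assms] by blast
next
  assume C: "C \<subseteq> E \<and> hist_config indep C"
  have "\<not> unf_cf indep E prec a b" if "a \<in> C" "b \<in> C" for a b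
  proof
    assume "unf_cf indep E prec a b"
    then obtain a' b' where "a' = a \<or> a' \<in> fset (hist a)" "b' = b \<or> b' \<in> fset (hist b)"
      and "imm_conflict indep a' b'"
      unfolding unf_cf_iff[OF assms] by blast
    moreover from calculation(1,2) have "a' \<in> C" "b' \<in> C"
      using C that unfolding hist_config_def by blast+
    ultimately show False
      using C unfolding hist_config_def by blast
  qed
  then show "is_config (unf_pes indep E prec) C"
    using C unfolding is_config_def unf_pes_def hist_config_def unf_lt_def by auto
qed

definition hist_inter :: "'f event set \<Rightarrow> 'f list set" where
  "hist_inter C = {map lab xs | xs. distinct xs \<and> set xs = C \<and>
     (\<forall>i<length xs. \<forall>j<length xs. xs ! i \<in> fset (hist (xs ! j)) \<longrightarrow> i < j)}"

lemma inter_unf_pes: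
  assumes "C \<subseteq> E"
  shows "inter (unf_pes indep E prec) C = hist_inter C"
proof -
  have "(\<forall>i<length xs. \<forall>j<length xs. unf_lt E (xs ! i) (xs ! j) \<longrightarrow> i < j) \<longleftrightarrow>
      (\<forall>i<length xs. \<forall>j<length xs. xs ! i \<in> fset (hist (xs ! j)) \<longrightarrow> i < j)" if "set xs = C" for xs
    using assms that unfolding unf_lt_def by (auto dest: nth_mem)
  then show ?thesis
    unfolding inter_def hist_inter_def unf_pes_def by auto
qed

definition locally_addable ::
  "('d::{lattice,order_bot} \<Rightarrow> 'd) set \<Rightarrow> (('d \<Rightarrow> 'd) \<Rightarrow> ('d \<Rightarrow> 'd) \<Rightarrow> bool) \<Rightarrow> 'd \<Rightarrow>
   ('d \<Rightarrow> 'd) event \<Rightarrow> bool" where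
  "locally_addable F indep d0 e \<longleftrightarrow> hist_config indep (fset (hist e)) \<and> lab e \<in> F \<and>
     lab e (Inf_fin (seq_state d0 ` hist_inter (fset (hist e)))) \<noteq> bot \<and>
     (\<forall>e'\<in>fset (hist e). \<not> (\<exists>e''\<in>fset (hist e). e' \<in> fset (hist e'')) \<longrightarrow>
        \<not> indep (lab e) (lab e'))"

lemma addable_unf_pes_iff:
  assumes "causal_order E prec" "symp indep"
  shows "addable F indep d0 (unf_pes indep E prec) e \<longleftrightarrow>
    e \<notin> E \<and> fset (hist e) \<subseteq> E \<and> locally_addable F indep d0 e"
proof (cases "fset (hist e) \<subseteq> E")
  case True
  then show ?thesis
    unfolding addable_def locally_addable_def conf_state_def is_config_unf_pes_iff[OF assms]
      inter_unf_pes[OF True]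
    by (auto simp: unf_pes_def unf_lt_def)
next
  case False
  then show ?thesis
    unfolding addable_def is_config_unf_pes_iff[OF assms] by (simp add: unf_pes_def)
qed

lemma unfolding_run_causal_order:
  assumes "unfolding_run F indep d0 E prec"
  shows "causal_order E prec"
proof -
  have "fset (hist x) \<subseteq> {e'\<in>E. prec e' x}" if "x \<in> E" for x
    using assms that unfolding unfolding_run_def addable_def is_config_def unf_pes_def by auto
  moreover have "asymp prec"
    using assms unfolding unfolding_run_def by (auto dest: wf_asym)
  ultimately show ?thesis
    using assms unfolding unfolding_run_def causal_order_def by blast
qed

lemma unfolding_run_mem_iff:
  assumes run: "unfolding_run F indep d0 E prec" and "symp indep"
  shows "e \<in> E \<longleftrightarrow> fset (hist e) \<subseteq> E \<and> locally_addable F indep d0 e"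
proof -
  note order = unfolding_run_causal_order[OF run]
  have "locally_addable F indep d0 e" if "e \<in> E"
    using run that addable_unf_pes_iff[OF causal_order_restrict[OF order] \<open>symp indep\<close>]
    unfolding unfolding_run_def by blast
  then show ?thesis
    using run causal_order_hist_subset[OF order] addable_unf_pes_iff[OF order \<open>symp indep\<close>]
    unfolding unfolding_run_def by blast
qed

inductive unf_event ::
  "('d::{lattice,order_bot} \<Rightarrow> 'd) set \<Rightarrow> (('d \<Rightarrow> 'd) \<Rightarrow> ('d \<Rightarrow> 'd) \<Rightarrow> bool) \<Rightarrow> 'd \<Rightarrow>
   ('d \<Rightarrow> 'd) event \<Rightarrow> bool" for F indep d0 where
  "(\<forall>x\<in>fset (hist e). unf_event F indep d0 x) \<Longrightarrow> locally_addable F indep d0 e \<Longrightarrow>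
   unf_event F indep d0 e"

lemma unfolding_run_events:
  assumes "unfolding_run F indep d0 E prec" "symp indep"
  shows "E = {e. unf_event F indep d0 e}"
proof -
  have "e \<in> E \<longleftrightarrow> unf_event F indep d0 e" for e
  proof (induction e)
    case (Ev f C)
    then have "fset C \<subseteq> E \<longleftrightarrow> (\<forall>x\<in>fset C. unf_event F indep d0 x)"
      by blast
    then show ?case
      unfolding unfolding_run_mem_iff[OF assms, of "Ev f C"] unf_event.simps[of _ _ _ "Ev f C"]
      by simp
  qed
  then show ?thesis by blast
qed

lemma is_lpes_unf_pes:
  assumes order: "causal_order E prec" and "symp indep"
    and hist: "\<forall>e\<in>E. hist_config indep (fset (hist e))"
  shows "is_lpes (unf_pes indep E prec)"
proof -
  note cf = unf_cf_iff[OF assms(1,2)]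
  have hist_trans: "fset (hist y) \<subseteq> fset (hist x)" if "x \<in> E" "y \<in> fset (hist x)" for x y
    using hist that unfolding hist_config_def by blast
  have hist_free: "\<not> imm_conflict indep a b"
    if "x \<in> E" "a \<in> fset (hist x)" "b \<in> fset (hist x)" for x a b
    using hist that unfolding hist_config_def by blast
  have "\<forall>a b. unf_lt E a b \<longrightarrow> a \<in> E \<and> b \<in> E"
    using causal_order_hist_subset[OF order] unfolding unf_lt_def by blast
  moreover have "\<forall>a. \<not> unf_lt E a a"
    using size_less_of_mem_hist unfolding unf_lt_def by blast
  moreover have "\<forall>a b c. unf_lt E a b \<longrightarrow> unf_lt E b c \<longrightarrow> unf_lt E a c"
    using hist_trans unfolding unf_lt_def by blast
  moreover have "\<forall>e\<in>E. finite {e'. unf_lt E e' e}"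
    unfolding unf_lt_def by simp
  moreover have "\<forall>a b. unf_cf indep E prec a b \<longrightarrow> a \<in> E \<and> b \<in> E"
    unfolding cf by blast
  moreover have "\<forall>a b. unf_cf indep E prec a b \<longrightarrow> unf_cf indep E prec b a"
    unfolding cf imm_conflict_def by blast
  moreover have "\<forall>a. \<not> unf_cf indep E prec a a"
    unfolding cf using hist_free by (auto simp: imm_conflict_def)
  moreover have "\<forall>a b c. unf_cf indep E prec a b \<longrightarrow> unf_lt E b c \<longrightarrow> unf_cf indep E prec a c"
    unfolding cf unf_lt_def using hist_trans by blast
  ultimately show ?thesis
    unfolding is_lpes_def unf_pes_def case_prod_conv by (intro conjI)
qed

lemma unfolding_run_exists:
  fixes F :: "('d::{lattice,order_bot} \<Rightarrow> 'd) set"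
  assumes "symp indep"
  shows "\<exists>E prec. unfolding_run F indep d0 E prec"
proof -
  obtain Q :: "('d \<Rightarrow> 'd) event rel" where Q: "wf Q" "trans Q" "total Q" "measure size \<subseteq> Q"
    using exists_total_wf_extending_measure by blast
  define E where "E = {e. unf_event F indep d0 e}"
  define prec where "prec a b \<longleftrightarrow> a \<in> E \<and> b \<in> E \<and> (a, b) \<in> Q" for a b
  have hist_in_E: "fset (hist x) \<subseteq> E" and local: "locally_addable F indep d0 x" if "x \<in> E" for x
    using that unfolding E_def by (auto elim: unf_event.cases)
  have wf_prec: "wf {(a, b). prec a b}"
    using Q(1) by (rule wf_subset) (auto simp: prec_def)
  have field: "\<forall>a b. prec a b \<longrightarrow> a \<in> E \<and> b \<in> E"
    unfolding prec_def by blast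
  have "transp prec"
    using Q(2) unfolding prec_def transp_def trans_def by blast
  have "asymp prec"
    using wf_prec by (auto dest: wf_asym)
  have total: "\<forall>a\<in>E. \<forall>b\<in>E. a \<noteq> b \<longrightarrow> prec a b \<or> prec b a"
    using Q(3) unfolding prec_def total_on_def by blast
  have hist_prec: "\<forall>x\<in>E. \<forall>y\<in>fset (hist x). prec y x"
    using Q(4) size_less_of_mem_hist hist_in_E unfolding prec_def by fastforce
  have order: "causal_order E prec"
    unfolding causal_order_def
    using field \<open>transp prec\<close> \<open>asymp prec\<close> total hist_prec by blast
  have "addable F indep d0 (unf_pes indep {e'\<in>E. prec e' e} (\<lambda>a b. prec a b \<and> prec b e)) e"
    if "e \<in> E" for e
  proof -
    have "e \<notin> {e'\<in>E. prec e' e}"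
      using wf_prec by (auto dest: wf_asym)
    moreover have "fset (hist e) \<subseteq> {e'\<in>E. prec e' e}"
      using that hist_in_E hist_prec by blast
    ultimately show ?thesis
      unfolding addable_unf_pes_iff[OF causal_order_restrict[OF order] assms]
      using local[OF that] by blast
  qed
  moreover have "\<not> addable F indep d0 (unf_pes indep E prec) e" for e
  proof
    assume "addable F indep d0 (unf_pes indep E prec) e"
    then have "e \<notin> E" "fset (hist e) \<subseteq> E" "locally_addable F indep d0 e"
      unfolding addable_unf_pes_iff[OF order assms] by blast+
    then show False
      unfolding E_def by (auto intro: unf_event.intros)
  qed
  ultimately have "unfolding_run F indep d0 E prec"
    unfolding unfolding_run_def using field \<open>transp prec\<close> wf_prec total by blast
  then show ?thesis by blast
qed

theorem proposition2:
  fixes F :: "('d::{lattice,order_bot} \<Rightarrow> 'd) set"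
    and d0 :: 'd
    and indep :: "('d \<Rightarrow> 'd) \<Rightarrow> ('d \<Rightarrow> 'd) \<Rightarrow> bool"
  assumes "analysis_instance F"
    and "\<forall>f g. indep f g \<longrightarrow> f \<in> F \<and> g \<in> F"
    and "symp indep"
  shows "(\<exists>E prec. unfolding_run F indep d0 E prec) \<and>
         (\<forall>E prec E' prec'. unfolding_run F indep d0 E prec \<longrightarrow>
             unfolding_run F indep d0 E' prec' \<longrightarrow>
             unf_pes indep E prec = unf_pes indep E' prec') \<and>
         (\<forall>E prec. unfolding_run F indep d0 E prec \<longrightarrow> is_lpes (unf_pes indep E prec))"
proof (intro conjI allI impI)
  show "\<exists>E prec. unfolding_run F indep d0 E prec"
    using unfolding_run_exists[OF assms(3)] .
next
  fix E prec assume run: "unfolding_run F indep d0 E prec"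
  have "\<forall>e\<in>E. hist_config indep (fset (hist e))"
    using unfolding_run_mem_iff[OF run assms(3)] unfolding locally_addable_def by blast
  then show "is_lpes (unf_pes indep E prec)"
    using is_lpes_unf_pes[OF unfolding_run_causal_order[OF run] assms(3)] by blast
next
  fix E prec E' prec'
  assume run: "unfolding_run F indep d0 E prec" and run': "unfolding_run F indep d0 E' prec'"
  have "E = E'"
    using unfolding_run_events[OF run assms(3)] unfolding_run_events[OF run' assms(3)] by simp
  moreover have "unf_cf indep E prec = unf_cf indep E' prec'"
    using unf_cf_iff[OF unfolding_run_causal_order[OF run] assms(3)]
      unf_cf_iff[OF unfolding_run_causal_order[OF run'] assms(3)] \<open>E = E'\<close>
    by (intro ext) simp
  ultimately show "unf_pes indep E prec = unf_pes indep E' prec'"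
    unfolding unf_pes_def by simp
qed

end
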